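(* Let $N$ be a finitely generated, semipositive binoid, $I$ an ideal of $N$ and $J$ an $N_+$-primary ideal of $N$. Then all pointed sets below are finite and $$\#\,N/J+\#\,(I\cap J)/(I+J)=\#\,I/(I+J)+\#\,(N/I)/(J+N/I).$$
   Context: A binoid $(N,+,0,\infty)$ is a commutative monoid $(N,+,0)$ with an element $\infty$ satisfying $a+\infty=\infty$ for all $a\in N$. Write $N^\times$ for the group of units of $N$ and $N_+=N\setminus N^\times$. $N$ is finitely generated if it is finitely generated as a monoid; semipositive if $N\neq\{\infty\}$ and $N^\times$ is finite. An ideal of $N$ is a nonempty subset $I\subseteq N$ with $I+N\subseteq I$ (so $\infty\in I$). An ideal $\mathfrak n$ is $N_+$-primary if $\mathfrak n\subseteq N_+$ and for every $a\in N_+$ there is $k\ge1$ with $ka\in\mathfrak n$. The residue class binoid $N/I$ is $(N\setminus I)\cup\{\infty\}$. An $N$-set is a pointed set $(S,p)$ with a map $N\times S\to S$, $(n,s)\mapsto n+s$, such that $(n+m)+s=n+(m+s)$, $0+s=s$, $\infty+s=p$ and $n+p=p$. $N$, its ideals and $N/I$ are $N$-sets with distinguished point $\infty$. For an ideal $J$ and an $N$-set $T$, $J+T=\{a+t:a\in J,t\in T\}$ is an $N$-subset; for an $N$-subset $S\subseteq T$ (a subset containing $p$ and stable under the action), the quotient $T/S$ is the $N$-set $(T\setminus S)\cup\{p\}$ (with $S$ collapsed to the point). In particular $I+J=\{a+b:a\in I,b\in J\}\subseteq I\cap J$. For a finite pointed set $S$ we write $\#S=|S|-1$. *)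

theory Defs
  imports Main
begin

definition binoid :: "'a set \<Rightarrow> ('a \<Rightarrow> 'a \<Rightarrow> 'a) \<Rightarrow> 'a \<Rightarrow> 'a \<Rightarrow> bool" where
  "binoid N f z w \<longleftrightarrow>
     z \<in> N \<and> w \<in> N \<and>
     (\<forall>a\<in>N. \<forall>b\<in>N. f a b \<in> N) \<and>
     (\<forall>a\<in>N. \<forall>b\<in>N. \<forall>c\<in>N. f (f a b) c = f a (f b c)) \<and>
     (\<forall>a\<in>N. \<forall>b\<in>N. f a b = f b a) \<and>
     (\<forall>a\<in>N. f z a = a) \<and>
     (\<forall>a\<in>N. f a w = w)"

inductive_set gen_monoid :: "('a \<Rightarrow> 'a \<Rightarrow> 'a) \<Rightarrow> 'a \<Rightarrow> 'a set \<Rightarrow> 'a set"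
  for f z G where
  gen_zero: "z \<in> gen_monoid f z G"
| gen_base: "g \<in> G \<Longrightarrow> g \<in> gen_monoid f z G"
| gen_add: "a \<in> gen_monoid f z G \<Longrightarrow> b \<in> gen_monoid f z G \<Longrightarrow> f a b \<in> gen_monoid f z G"

definition fin_gen :: "'a set \<Rightarrow> ('a \<Rightarrow> 'a \<Rightarrow> 'a) \<Rightarrow> 'a \<Rightarrow> bool" where
  "fin_gen N f z \<longleftrightarrow> (\<exists>G. finite G \<and> G \<subseteq> N \<and> gen_monoid f z G = N)"

definition units :: "'a set \<Rightarrow> ('a \<Rightarrow> 'a \<Rightarrow> 'a) \<Rightarrow> 'a \<Rightarrow> 'a set" where
  "units N f z = {a \<in> N. \<exists>b\<in>N. f a b = z}"

definition nonunits :: "'a set \<Rightarrow> ('a \<Rightarrow> 'a \<Rightarrow> 'a) \<Rightarrow> 'a \<Rightarrow> 'a set" where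
  "nonunits N f z = N - units N f z"

definition semipositive :: "'a set \<Rightarrow> ('a \<Rightarrow> 'a \<Rightarrow> 'a) \<Rightarrow> 'a \<Rightarrow> 'a \<Rightarrow> bool" where
  "semipositive N f z w \<longleftrightarrow> N \<noteq> {w} \<and> finite (units N f z)"

definition binoid_ideal :: "'a set \<Rightarrow> ('a \<Rightarrow> 'a \<Rightarrow> 'a) \<Rightarrow> 'a set \<Rightarrow> bool" where
  "binoid_ideal N f I \<longleftrightarrow> I \<noteq> {} \<and> I \<subseteq> N \<and> (\<forall>a\<in>I. \<forall>n\<in>N. f a n \<in> I)"

definition nsmul :: "('a \<Rightarrow> 'a \<Rightarrow> 'a) \<Rightarrow> 'a \<Rightarrow> nat \<Rightarrow> 'a \<Rightarrow> 'a" where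
  "nsmul f z k a = ((f a) ^^ k) z"

definition primary_ideal :: "'a set \<Rightarrow> ('a \<Rightarrow> 'a \<Rightarrow> 'a) \<Rightarrow> 'a \<Rightarrow> 'a set \<Rightarrow> bool" where
  "primary_ideal N f z J \<longleftrightarrow> binoid_ideal N f J \<and> J \<subseteq> nonunits N f z \<and>
     (\<forall>a\<in>nonunits N f z. \<exists>k\<ge>1. nsmul f z k a \<in> J)"

text \<open>Residue class binoid N/I as a pointed set (point w), with its N-action.\<close>
definition resid :: "'a set \<Rightarrow> 'a set \<Rightarrow> 'a \<Rightarrow> 'a set" where
  "resid N I w = (N - I) \<union> {w}"

definition resid_act :: "('a \<Rightarrow> 'a \<Rightarrow> 'a) \<Rightarrow> 'a set \<Rightarrow> 'a \<Rightarrow> 'a \<Rightarrow> 'a \<Rightarrow> 'a" where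
  "resid_act f I w n s = (if f n s \<in> I then w else f n s)"

definition set_sum :: "('a \<Rightarrow> 'b \<Rightarrow> 'b) \<Rightarrow> 'a set \<Rightarrow> 'b set \<Rightarrow> 'b set" where
  "set_sum act J T = {act a t | a t. a \<in> J \<and> t \<in> T}"

text \<open>Quotient T/S of pointed sets with point p, and #S = |S| - 1.\<close>
definition pquot :: "'b set \<Rightarrow> 'b set \<Rightarrow> 'b \<Rightarrow> 'b set" where
  "pquot T S p = (T - S) \<union> {p}"

definition psize :: "'b set \<Rightarrow> nat" where
  "psize S = card S - 1"

end

theory Submission
  imports Defs Complex_Main
begin

text \<open>Each of the four pointed sets is a set difference with the point \<open>w\<close> adjoined:
  \<open>N/J\<close> to \<open>N - J\<close>, \<open>(I \<inter> J)/(I + J)\<close> to \<open>I \<inter> J - (I + J)\<close>, \<open>I/(I + J)\<close> to \<open>I - (I + J)\<close>,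
  and \<open>(N/I)/(J + N/I)\<close> to \<open>N - I - J\<close>. Since \<open>I + J \<subseteq> I \<inter> J\<close>, the identity is then the
  count of the disjoint decompositions \<open>N - J = (I - J) \<union> (N - I - J)\<close> and
  \<open>I - (I + J) = (I - J) \<union> (I \<inter> J - (I + J))\<close>.
  Finiteness is the real content. Every element of \<open>N\<close> is a sum of multiples of finitely many
  generators; once the multiple of a non-unit generator reaches a power lying in \<open>J\<close> the element
  lies in \<open>J\<close>, and as there are finitely many units, \<open>N - J\<close> is finite. For \<open>I - (I + J)\<close>, an
  infinite sequence in it has, by Dickson's lemma, a subsequence \<open>x\<^sub>0 + c\<^sub>n\<close>; all \<open>c\<^sub>n\<close> are
  distinct and lie outside \<open>J\<close>, contradicting the finiteness of \<open>N - J\<close>.\<close>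

lemma nat_seq_incseq_subseq:
  fixes s :: "nat \<Rightarrow> nat"
  obtains \<psi> :: "nat \<Rightarrow> nat" where "strict_mono \<psi>" "incseq (s \<circ> \<psi>)"
proof -
  obtain g where g: "strict_mono g" "monoseq (s \<circ> g)"
    using seq_monosub[of s] unfolding comp_def by blast
  show thesis
  proof (cases "incseq (s \<circ> g)")
    case True
    then show thesis using g(1) that by blast
  next
    case False
    then have dec: "decseq (s \<circ> g)"
      using g(2) unfolding monoseq_iff by blast
    define m where "m = (LEAST m. m \<in> range (s \<circ> g))"
    obtain n0 where n0: "(s \<circ> g) n0 = m"
      unfolding m_def using LeastI_ex[of "\<lambda>m. m \<in> range (s \<circ> g)"] by (metis rangeE rangeI)
    have "(s \<circ> g) (i + n0) = m" for i
    proof (rule antisym)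
      show "(s \<circ> g) (i + n0) \<le> m"
        using dec n0 unfolding decseq_def by (metis le_add2)
      show "m \<le> (s \<circ> g) (i + n0)"
        unfolding m_def by (rule Least_le) (rule rangeI)
    qed
    then have "incseq (s \<circ> (\<lambda>i. g (i + n0)))"
      unfolding incseq_def by (metis comp_apply order_refl)
    moreover have "strict_mono (\<lambda>i. g (i + n0))"
      using g(1) unfolding strict_mono_def by simp
    ultimately show thesis using that by blast
  qed
qed

definition divides :: "'a set \<Rightarrow> ('a \<Rightarrow> 'a \<Rightarrow> 'a) \<Rightarrow> 'a \<Rightarrow> 'a \<Rightarrow> bool" where
  "divides N f a b \<longleftrightarrow> (\<exists>c\<in>N. b = f a c)"

lemma mem_set_sum: "x \<in> set_sum act J T \<longleftrightarrow> (\<exists>a\<in>J. \<exists>t\<in>T. x = act a t)"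
  unfolding set_sum_def by blast

lemma psize_pquot:
  assumes "finite (T - S)" "p \<in> S"
  shows "psize (pquot T S p) = card (T - S)"
proof -
  have "pquot T S p = insert p (T - S)" "p \<notin> T - S"
    using assms(2) unfolding pquot_def by blast+
  then show ?thesis unfolding psize_def using assms(1) by simp
qed

lemma finite_pquot: "finite (T - S) \<Longrightarrow> finite (pquot T S p)"
  unfolding pquot_def by simp

lemma card_diff_decompositions:
  assumes "finite (N - J)" "finite (I - S)" "I \<subseteq> N" "S \<subseteq> I \<inter> J"
  shows "card (N - J) + card (I \<inter> J - S) = card (I - S) + card (N - I - J)"
proof -
  have "finite (I - J)" "finite (N - I - J)" "finite (I \<inter> J - S)"
    using assms by (auto intro: finite_subset[OF _ assms(1)] finite_subset[OF _ assms(2)])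
  moreover have "N - J = (I - J) \<union> (N - I - J)" "I - S = (I - J) \<union> (I \<inter> J - S)"
    using assms(3,4) by blast+
  ultimately have "card (N - J) = card (I - J) + card (N - I - J)"
    "card (I - S) = card (I - J) + card (I \<inter> J - S)"
    by (metis Diff_disjoint Int_Diff card_Un_disjoint inf_commute inf_left_commute)+
  then show ?thesis by simp
qed

context
  fixes N :: "'a set" and f :: "'a \<Rightarrow> 'a \<Rightarrow> 'a" and z w :: 'a
  assumes binoid: "binoid N f z w"
begin

lemma binoid_zero_closed: "z \<in> N"
  and binoid_absorbing_closed: "w \<in> N"
  and binoid_closed: "a \<in> N \<Longrightarrow> b \<in> N \<Longrightarrow> f a b \<in> N"
  and binoid_assoc: "a \<in> N \<Longrightarrow> b \<in> N \<Longrightarrow> c \<in> N \<Longrightarrow> f (f a b) c = f a (f b c)"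
  and binoid_commute: "a \<in> N \<Longrightarrow> b \<in> N \<Longrightarrow> f a b = f b a"
  and binoid_zero_left: "a \<in> N \<Longrightarrow> f z a = a"
  and binoid_absorbing: "a \<in> N \<Longrightarrow> f a w = w"
  using binoid unfolding binoid_def by blast+

lemma binoid_zero_right: "a \<in> N \<Longrightarrow> f a z = a"
  using binoid_commute[of a z] binoid_zero_left[of a] binoid_zero_closed by simp

lemma binoid_left_commute: "a \<in> N \<Longrightarrow> b \<in> N \<Longrightarrow> c \<in> N \<Longrightarrow> f a (f b c) = f b (f a c)"
  using binoid_assoc[of a b c] binoid_assoc[of b a c] binoid_commute[of a b] by simp

lemma binoid_swap:
  "a \<in> N \<Longrightarrow> b \<in> N \<Longrightarrow> c \<in> N \<Longrightarrow> d \<in> N \<Longrightarrow> f (f a b) (f c d) = f (f a c) (f b d)"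
  by (simp add: binoid_assoc binoid_closed binoid_left_commute[of b c d])

lemma ideal_absorbing:
  assumes "binoid_ideal N f I"
  shows "w \<in> I"
proof -
  obtain a where "a \<in> I" "I \<subseteq> N" "\<forall>a\<in>I. \<forall>n\<in>N. f a n \<in> I"
    using assms unfolding binoid_ideal_def by blast
  then show ?thesis using binoid_absorbing binoid_absorbing_closed by force
qed

lemma set_sum_ideals_subset_Int:
  assumes "binoid_ideal N f I" "binoid_ideal N f J"
  shows "set_sum f I J \<subseteq> I \<inter> J"
  using assms unfolding binoid_ideal_def mem_set_sum subset_iff
  by (metis IntI binoid_commute)

lemma absorbing_mem_set_sum_ideals:
  assumes "binoid_ideal N f I" "binoid_ideal N f J"
  shows "w \<in> set_sum f I J"
  using ideal_absorbing[OF assms(1)] ideal_absorbing[OF assms(2)]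
    binoid_absorbing[OF binoid_absorbing_closed]
  unfolding mem_set_sum by metis

text \<open>In \<open>N/I\<close> an element of \<open>N - I\<close> is hit by \<open>J\<close> exactly when it lies in \<open>J\<close>
  (using \<open>x = x + 0\<close>, where \<open>0 \<notin> I\<close> as soon as \<open>N - I\<close> is nonempty).\<close>
lemma resid_diff_set_sum:
  assumes I: "binoid_ideal N f I" and J: "binoid_ideal N f J"
  shows "resid N I w - set_sum (resid_act f I w) J (resid N I w) = N - I - J"
    (is "_ - ?RS = _")
proof -
  have wI: "w \<in> I" and wJ: "w \<in> J"
    using ideal_absorbing I J by blast+
  have "w \<in> ?RS"
  proof -
    have "w = resid_act f I w w w" "w \<in> resid N I w"
      using binoid_absorbing[OF binoid_absorbing_closed] unfolding resid_act_def resid_def by simp_all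
    then show ?thesis using wJ unfolding mem_set_sum by blast
  qed
  moreover have "x \<in> ?RS" if x: "x \<in> N - I" "x \<in> J" for x
  proof -
    have "z \<notin> I"
      using x I binoid_zero_left unfolding binoid_ideal_def by force
    then have "z \<in> resid N I w" "x = resid_act f I w x z"
      using x binoid_zero_closed binoid_zero_right[of x]
      unfolding resid_def resid_act_def by simp_all
    then show ?thesis using x(2) unfolding mem_set_sum by blast
  qed
  moreover have "x \<in> I \<or> x \<in> J" if x: "x \<in> ?RS" for x
  proof -
    obtain a t where "a \<in> J" "t \<in> resid N I w" "x = resid_act f I w a t"
      using x unfolding mem_set_sum by blast
    moreover have "t \<in> N"
      using calculation(2) binoid_absorbing_closed unfolding resid_def by blast
    ultimately show ?thesis
      using wI J unfolding resid_act_def binoid_ideal_def by (auto split: if_splits)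
  qed
  ultimately show ?thesis
    unfolding resid_def by blast
qed

lemma nsmul_0: "nsmul f z 0 a = z"
  by (simp add: nsmul_def)

lemma nsmul_Suc: "nsmul f z (Suc n) a = f a (nsmul f z n a)"
  by (simp add: nsmul_def)

lemma nsmul_closed: "a \<in> N \<Longrightarrow> nsmul f z n a \<in> N"
  by (induction n) (simp_all add: nsmul_0 nsmul_Suc binoid_zero_closed binoid_closed)

lemma nsmul_1: "a \<in> N \<Longrightarrow> nsmul f z 1 a = a"
  by (simp add: nsmul_Suc nsmul_0 binoid_zero_right)

lemma nsmul_add: "a \<in> N \<Longrightarrow> nsmul f z (m + n) a = f (nsmul f z m a) (nsmul f z n a)"
proof (induction m)
  case 0
  then show ?case by (simp add: nsmul_0 binoid_zero_left nsmul_closed)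
next
  case (Suc m)
  then show ?case
    using binoid_assoc[of a "nsmul f z m a" "nsmul f z n a"] by (simp add: nsmul_Suc nsmul_closed)
qed

lemma units_closed:
  assumes "a \<in> units N f z" "b \<in> units N f z"
  shows "f a b \<in> units N f z"
proof -
  obtain a' b' where ab: "a \<in> N" "b \<in> N" "a' \<in> N" "b' \<in> N" "f a a' = z" "f b b' = z"
    using assms unfolding units_def by blast
  then have "f (f a b) (f a' b') = z"
    using binoid_swap[of a b a' b'] binoid_zero_left binoid_zero_closed by simp
  then show ?thesis
    unfolding units_def using ab binoid_closed by blast
qed

lemma nsmul_unit: "a \<in> units N f z \<Longrightarrow> nsmul f z n a \<in> units N f z"
proof (induction n)
  case 0
  then show ?case
    using binoid_zero_closed binoid_zero_left unfolding units_def nsmul_0 by blast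
next
  case (Suc n)
  then show ?case by (simp add: nsmul_Suc units_closed)
qed

lemma divides_add_powers:
  assumes "g \<in> N" "y \<in> N" "divides N f y y'" "m \<le> n"
  shows "divides N f (f (nsmul f z m g) y) (f (nsmul f z n g) y')"
proof -
  obtain c where c: "c \<in> N" "y' = f y c"
    using assms(3) unfolding divides_def by blast
  obtain d where d: "n = m + d"
    using assms(4) le_Suc_ex by blast
  have "f (nsmul f z n g) y' = f (f (nsmul f z m g) (nsmul f z d g)) (f y c)"
    using assms(1) c d nsmul_add by simp
  also have "\<dots> = f (f (nsmul f z m g) y) (f (nsmul f z d g) c)"
    using binoid_swap nsmul_closed assms(1,2) c(1) by simp
  finally show ?thesis
    unfolding divides_def using binoid_closed nsmul_closed assms(1) c(1) by blast
qed

lemma gen_monoid_subset: "G \<subseteq> N \<Longrightarrow> gen_monoid f z G \<subseteq> N"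
proof
  show "x \<in> N" if "G \<subseteq> N" "x \<in> gen_monoid f z G" for x
    using that(2,1)
    by (induction rule: gen_monoid.induct) (auto simp: binoid_zero_closed binoid_closed)
qed

lemma gen_monoid_empty: "x \<in> gen_monoid f z {} \<Longrightarrow> x = z"
  by (induction rule: gen_monoid.induct) (simp_all add: binoid_zero_left binoid_zero_closed)

lemma gen_monoid_insert_decomp:
  assumes "insert g G \<subseteq> N" "x \<in> gen_monoid f z (insert g G)"
  obtains n y where "y \<in> gen_monoid f z G" "x = f (nsmul f z n g) y"
proof -
  have gN: "g \<in> N" and GN: "G \<subseteq> N"
    using assms(1) by auto
  have "\<exists>n. \<exists>y\<in>gen_monoid f z G. x = f (nsmul f z n g) y"
    using assms(2)
  proof (induction rule: gen_monoid.induct)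
    case gen_zero
    show ?case
      using binoid_zero_left binoid_zero_closed gen_monoid.gen_zero nsmul_0 by metis
  next
    case (gen_base h)
    then consider "h = g" | "h \<in> G" by blast
    then show ?case
    proof cases
      case 1
      then show ?thesis
        using gN nsmul_1 binoid_zero_right gen_monoid.gen_zero by metis
    next
      case 2
      then show ?thesis
        using GN nsmul_0 binoid_zero_left gen_monoid.gen_base by (metis subsetD)
    qed
  next
    case (gen_add a b)
    then obtain n1 y1 n2 y2 where
      h: "y1 \<in> gen_monoid f z G" "a = f (nsmul f z n1 g) y1"
        "y2 \<in> gen_monoid f z G" "b = f (nsmul f z n2 g) y2"
      by blast
    have "y1 \<in> N" "y2 \<in> N"
      using h(1,3) gen_monoid_subset[OF GN] by blast+
    then have "f a b = f (nsmul f z (n1 + n2) g) (f y1 y2)"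
      unfolding h(2,4) nsmul_add[OF gN] using binoid_swap nsmul_closed gN by simp
    then show ?case
      using gen_monoid.gen_add[OF h(1,3)] by blast
  qed
  then show thesis using that by blast
qed

lemma dickson_divides_subseq:
  assumes "finite G" "G \<subseteq> N" "\<And>i. x i \<in> gen_monoid f z G"
  shows "\<exists>\<phi> :: nat \<Rightarrow> nat. strict_mono \<phi> \<and> (\<forall>i j. i \<le> j \<longrightarrow> divides N f (x (\<phi> i)) (x (\<phi> j)))"
  using assms
proof (induction G arbitrary: x rule: finite_induct)
  case empty
  then have "\<And>i. x i = z"
    using gen_monoid_empty by blast
  then have "divides N f (x i) (x j)" for i j
    unfolding divides_def using binoid_zero_closed binoid_zero_left by metis
  then show ?case
    by (intro exI[of _ id]) (simp add: strict_mono_def)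
next
  case (insert g G)
  have gN: "g \<in> N" and GN: "G \<subseteq> N"
    using insert.prems by auto
  have "\<exists>n y. y \<in> gen_monoid f z G \<and> x i = f (nsmul f z n g) y" for i
  proof -
    obtain n y where "y \<in> gen_monoid f z G" "x i = f (nsmul f z n g) y"
      using gen_monoid_insert_decomp[OF insert.prems(1,2)] .
    then show ?thesis by blast
  qed
  then have "\<exists>n. \<forall>i. \<exists>y. y \<in> gen_monoid f z G \<and> x i = f (nsmul f z (n i) g) y"
    by (intro choice allI)
  then obtain n where "\<forall>i. \<exists>y. y \<in> gen_monoid f z G \<and> x i = f (nsmul f z (n i) g) y"
    by blast
  then have "\<exists>y. \<forall>i. y i \<in> gen_monoid f z G \<and> x i = f (nsmul f z (n i) g) (y i)"
    by (rule choice)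
  then obtain y where ny: "\<And>i. y i \<in> gen_monoid f z G" "\<And>i. x i = f (nsmul f z (n i) g) (y i)"
    by blast
  obtain \<phi> :: "nat \<Rightarrow> nat"
    where \<phi>: "strict_mono \<phi>" "\<And>i j. i \<le> j \<Longrightarrow> divides N f (y (\<phi> i)) (y (\<phi> j))"
    using insert.IH[where x = y, OF GN ny(1)] by blast
  obtain \<psi> where \<psi>: "strict_mono \<psi>" "incseq (n \<circ> \<phi> \<circ> \<psi>)"
    by (rule nat_seq_incseq_subseq[of "n \<circ> \<phi>"])
  have "divides N f (x (\<phi> (\<psi> i))) (x (\<phi> (\<psi> j)))" if "i \<le> j" for i j
    unfolding ny(2)
  proof (rule divides_add_powers[OF gN])
    show "y (\<phi> (\<psi> i)) \<in> N"
      using gen_monoid_subset[OF GN] ny(1) by blast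
    show "divides N f (y (\<phi> (\<psi> i))) (y (\<phi> (\<psi> j)))"
      using \<phi>(2) \<psi>(1) that by (simp add: strict_mono_less_eq)
    show "n (\<phi> (\<psi> i)) \<le> n (\<phi> (\<psi> j))"
      using \<psi>(2) that by (simp add: incseq_def)
  qed
  moreover have "strict_mono (\<phi> \<circ> \<psi>)"
    using \<phi>(1) \<psi>(1) by (simp add: strict_mono_def)
  ultimately show ?case
    by (intro exI[of _ "\<phi> \<circ> \<psi>"]) (simp add: comp_def)
qed

lemma gen_monoid_finite_modulo_powers:
  assumes "finite G" "G \<subseteq> N" "finite (units N f z)"
  shows "\<exists>T. finite T \<and> (\<forall>x\<in>gen_monoid f z G.
       x \<in> T \<or> (\<exists>h\<in>G. h \<notin> units N f z \<and> divides N f (nsmul f z (K h) h) x))"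
  using assms(1,2)
proof (induction G rule: finite_induct)
  case empty
  then show ?case using gen_monoid_empty by (intro exI[of _ "{z}"]) blast
next
  case (insert g G)
  have gN: "g \<in> N" and GN: "G \<subseteq> N"
    using insert.prems by auto
  obtain T where T: "finite T" "\<And>x. x \<in> gen_monoid f z G \<Longrightarrow>
       x \<in> T \<or> (\<exists>h\<in>G. h \<notin> units N f z \<and> divides N f (nsmul f z (K h) h) x)"
    using insert.IH[OF GN] by blast
  define S where "S = units N f z \<union> (\<lambda>m. nsmul f z m g) ` {..<K g}"
  have "finite ((\<lambda>(a, t). f a t) ` (S \<times> T))"
    unfolding S_def using T(1) assms(3) by auto
  moreover have "x \<in> (\<lambda>(a, t). f a t) ` (S \<times> T)
      \<or> (\<exists>h\<in>insert g G. h \<notin> units N f z \<and> divides N f (nsmul f z (K h) h) x)"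
    if x: "x \<in> gen_monoid f z (insert g G)" for x
  proof -
    obtain n y where ny: "y \<in> gen_monoid f z G" "x = f (nsmul f z n g) y"
      using gen_monoid_insert_decomp[OF insert.prems(1) x] by blast
    have yN: "y \<in> N"
      using gen_monoid_subset[OF GN] ny(1) by blast
    consider "nsmul f z n g \<in> S" | "g \<notin> units N f z" "K g \<le> n"
      unfolding S_def using nsmul_unit by force
    then show ?thesis
    proof cases
      case 1
      show ?thesis
      proof (cases "y \<in> T")
        case True
        then show ?thesis using 1 ny(2) by force
      next
        case False
        then obtain h c where "h \<in> G" "h \<notin> units N f z" "c \<in> N"
          "y = f (nsmul f z (K h) h) c"
          using T(2)[OF ny(1)] unfolding divides_def by blast
        then show ?thesis
          unfolding ny(2) divides_def
          using binoid_left_commute binoid_closed nsmul_closed gN GN by (metis insertI2 subsetD)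
      qed
    next
      case 2
      have "divides N f z y"
        unfolding divides_def using yN binoid_zero_left[OF yN] by metis
      then have "divides N f (f (nsmul f z (K g) g) z) x"
        unfolding ny(2) using divides_add_powers[OF gN binoid_zero_closed _ 2(2)] by blast
      then have "divides N f (nsmul f z (K g) g) x"
        using binoid_zero_right[OF nsmul_closed[OF gN]] by simp
      then show ?thesis
        using 2(1) by blast
    qed
  qed
  ultimately show ?case
    by blast
qed

lemma finite_diff_primary_ideal:
  assumes "fin_gen N f z" "finite (units N f z)" "primary_ideal N f z J"
  shows "finite (N - J)"
proof -
  obtain G where G: "finite G" "G \<subseteq> N" "gen_monoid f z G = N"
    using assms(1) unfolding fin_gen_def by blast
  have "\<forall>h\<in>N - units N f z. \<exists>k. nsmul f z k h \<in> J"
    using assms(3) unfolding primary_ideal_def nonunits_def by blast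
  then obtain K where K: "\<forall>h\<in>N - units N f z. nsmul f z (K h) h \<in> J"
    by (rule bchoice[THEN exE])
  obtain T where T: "finite T" "\<And>x. x \<in> N \<Longrightarrow>
       x \<in> T \<or> (\<exists>h\<in>G. h \<notin> units N f z \<and> divides N f (nsmul f z (K h) h) x)"
    using gen_monoid_finite_modulo_powers[OF G(1,2) assms(2), of K] unfolding G(3) by blast
  have J_closed: "\<And>a n. a \<in> J \<Longrightarrow> n \<in> N \<Longrightarrow> f a n \<in> J"
    using assms(3) unfolding primary_ideal_def binoid_ideal_def by blast
  have "x \<in> T" if x: "x \<in> N" "x \<notin> J" for x
  proof (rule ccontr)
    assume "x \<notin> T"
    then obtain h c where "h \<in> G" "h \<notin> units N f z" "c \<in> N" "x = f (nsmul f z (K h) h) c"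
      using T(2)[OF x(1)] unfolding divides_def by blast
    then have "x \<in> J"
      using K J_closed G(2) by blast
    then show False using x(2) by blast
  qed
  then show ?thesis
    using T(1) finite_subset[of "N - J" T] by blast
qed

lemma finite_diff_set_sum:
  assumes "fin_gen N f z" "finite (N - J)" "A \<subseteq> N"
  shows "finite (A - set_sum f A J)"
proof (rule ccontr)
  assume "infinite (A - set_sum f A J)"
  then obtain x :: "nat \<Rightarrow> 'a" where x: "inj x" "range x \<subseteq> A - set_sum f A J"
    using infinite_countable_subset by blast
  obtain G where G: "finite G" "G \<subseteq> N" "gen_monoid f z G = N"
    using assms(1) unfolding fin_gen_def by blast
  have "x i \<in> gen_monoid f z G" for i
    using x(2) assms(3) G(3) by blast
  then have "\<exists>\<phi> :: nat \<Rightarrow> nat. strict_mono \<phi> \<and> (\<forall>i j. i \<le> j \<longrightarrow> divides N f (x (\<phi> i)) (x (\<phi> j)))"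
    by (rule dickson_divides_subseq[OF G(1,2)])
  then obtain \<phi> :: "nat \<Rightarrow> nat"
    where \<phi>: "strict_mono \<phi>" "\<forall>j. divides N f (x (\<phi> 0)) (x (\<phi> j))"
    by blast
  then have "\<forall>n. \<exists>c. c \<in> N \<and> x (\<phi> n) = f (x (\<phi> 0)) c"
    unfolding divides_def by blast
  then obtain c where c: "\<And>n. c n \<in> N" "\<And>n. x (\<phi> n) = f (x (\<phi> 0)) (c n)"
    by (rule choice[THEN exE]) blast
  have "c n \<notin> J" for n
  proof
    assume "c n \<in> J"
    moreover have "x (\<phi> 0) \<in> A" "x (\<phi> n) \<notin> set_sum f A J"
      using x(2) by auto
    ultimately show False
      using c(2)[of n] unfolding mem_set_sum by blast
  qed
  then have "range c \<subseteq> N - J"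
    using c(1) by blast
  then have "finite (range c)"
    using assms(2) by (rule finite_subset)
  moreover have "inj c"
  proof (rule injI)
    fix m n
    assume "c m = c n"
    then have "x (\<phi> m) = x (\<phi> n)"
      by (simp only: c(2)[of m] c(2)[of n])
    then show "m = n"
      using x(1) \<phi>(1) by (simp add: inj_eq strict_mono_eq)
  qed
  ultimately have "finite (UNIV :: nat set)"
    by (rule finite_imageD)
  then show False
    by simp
qed

end

theorem mainTheorem15:
  fixes N :: "'a set" and f :: "'a \<Rightarrow> 'a \<Rightarrow> 'a" and z w :: 'a and I J :: "'a set"
  assumes "binoid N f z w"
    and "fin_gen N f z"
    and "semipositive N f z w"
    and "binoid_ideal N f I"
    and "primary_ideal N f z J"
  shows "finite (pquot N J w)
    \<and> finite (pquot (I \<inter> J) (set_sum f I J) w)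
    \<and> finite (pquot I (set_sum f I J) w)
    \<and> finite (pquot (resid N I w) (set_sum (resid_act f I w) J (resid N I w)) w)
    \<and> psize (pquot N J w) + psize (pquot (I \<inter> J) (set_sum f I J) w)
      = psize (pquot I (set_sum f I J) w)
        + psize (pquot (resid N I w) (set_sum (resid_act f I w) J (resid N I w)) w)"
proof -
  have J: "binoid_ideal N f J"
    using assms(5) unfolding primary_ideal_def by blast
  have I_N: "I \<subseteq> N"
    using assms(4) unfolding binoid_ideal_def by blast
  have "finite (units N f z)"
    using assms(3) unfolding semipositive_def by blast
  then have fin_NJ: "finite (N - J)"
    using finite_diff_primary_ideal[OF assms(1,2) _ assms(5)] by blast
  have fin_IS: "finite (I - set_sum f I J)"
    using finite_diff_set_sum[OF assms(1,2) fin_NJ I_N] .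
  have S_sub: "set_sum f I J \<subseteq> I \<inter> J"
    using set_sum_ideals_subset_Int[OF assms(1,4) J] .
  have fin_IJS: "finite (I \<inter> J - set_sum f I J)"
    using fin_IS by (rule finite_subset[rotated]) blast
  have resid: "resid N I w - set_sum (resid_act f I w) J (resid N I w) = N - I - J"
    using resid_diff_set_sum[OF assms(1,4) J] .
  have w: "w \<in> J" "w \<in> set_sum f I J" "w \<in> set_sum (resid_act f I w) J (resid N I w)"
    using ideal_absorbing[OF assms(1) J] absorbing_mem_set_sum_ideals[OF assms(1,4) J]
      resid unfolding resid_def by auto
  have fin_NIJ: "finite (N - I - J)"
    using fin_NJ by (rule finite_subset[rotated]) blast
  show ?thesis
    using fin_NJ fin_IS fin_IJS fin_NIJ resid w card_diff_decompositions[OF fin_NJ fin_IS I_N S_sub]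
    by (simp add: finite_pquot psize_pquot)
qed

end
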